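(* Every statistically convergent sequence in an $S$-metric space $(X,S)$ is statistically bounded.
   Context: An $S$-metric on a nonempty set $X$ is a function $S:X^3\to[0,\infty)$ such that for all $x,y,z,a\in X$: $S(x,y,z)=0$ if and only if $x=y=z$, and $S(x,y,z)\le S(x,x,a)+S(y,y,a)+S(z,z,a)$. For $B\subset\mathbb N$ the natural density is $\delta(B)=\lim_{n\to\infty}\frac{|\{k\in B:k\le n\}|}{n}$ when the limit exists. A sequence $\{x_n\}$ is statistically convergent to $x\in X$ if for every $\varepsilon>0$, $\delta(\{n: S(x_n,x_n,x)\ge\varepsilon\})=0$. A sequence $\{x_n\}$ is statistically bounded if for any fixed $u\in X$ there exists a positive real number $B$ such that $\delta(\{n\in\mathbb N: S(x_n,x_n,u)\ge B\})=0$. *)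

theory Defs
  imports "HOL-Analysis.Analysis"
begin

definition S_metric :: "'a set \<Rightarrow> ('a \<Rightarrow> 'a \<Rightarrow> 'a \<Rightarrow> real) \<Rightarrow> bool" where
  "S_metric X S \<longleftrightarrow> X \<noteq> {} \<and>
     (\<forall>x\<in>X. \<forall>y\<in>X. \<forall>z\<in>X. S x y z \<ge> 0) \<and>
     (\<forall>x\<in>X. \<forall>y\<in>X. \<forall>z\<in>X. S x y z = 0 \<longleftrightarrow> x = y \<and> y = z) \<and>
     (\<forall>x\<in>X. \<forall>y\<in>X. \<forall>z\<in>X. \<forall>a\<in>X. S x y z \<le> S x x a + S y y a + S z z a)"

definition has_density :: "nat set \<Rightarrow> real \<Rightarrow> bool" where
  "has_density B d \<longleftrightarrow>
     ((\<lambda>n. real (card {k \<in> B. k \<le> n}) / real n) \<longlongrightarrow> d) sequentially"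

definition stat_convergent ::
  "'a set \<Rightarrow> ('a \<Rightarrow> 'a \<Rightarrow> 'a \<Rightarrow> real) \<Rightarrow> (nat \<Rightarrow> 'a) \<Rightarrow> 'a \<Rightarrow> bool" where
  "stat_convergent X S x l \<longleftrightarrow>
     (\<forall>\<epsilon>>0. has_density {n. S (x n) (x n) l \<ge> \<epsilon>} 0)"

definition stat_bounded ::
  "'a set \<Rightarrow> ('a \<Rightarrow> 'a \<Rightarrow> 'a \<Rightarrow> real) \<Rightarrow> (nat \<Rightarrow> 'a) \<Rightarrow> bool" where
  "stat_bounded X S x \<longleftrightarrow>
     (\<forall>u\<in>X. \<exists>B>0. has_density {n. S (x n) (x n) u \<ge> B} 0)"

end

theory Submission
  imports Defs
begin

text \<open>Moving the centre from \<open>l\<close> to \<open>u\<close> costs at most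
  \<open>S(x,x,u) \<le> 2 S(x,x,l) + S(u,u,l)\<close>, so the terms with \<open>S(x\<^sub>n,x\<^sub>n,u) \<ge> S(u,u,l) + 2\<close>
  all have \<open>S(x\<^sub>n,x\<^sub>n,l) \<ge> 1\<close> and hence form a set of density zero.\<close>

lemma has_density_zero_subset:
  assumes "A \<subseteq> C" and "has_density C 0"
  shows "has_density A 0"
  unfolding has_density_def
proof (rule tendsto_sandwich[of "\<lambda>_. 0" _ _ "\<lambda>n. real (card {k \<in> C. k \<le> n}) / real n"])
  have "card {k \<in> A. k \<le> n} \<le> card {k \<in> C. k \<le> n}" for n
    by (rule card_mono) (use assms(1) in auto)
  then show "\<forall>\<^sub>F n in sequentially. real (card {k \<in> A. k \<le> n}) / real n
      \<le> real (card {k \<in> C. k \<le> n}) / real n"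
    by (intro always_eventually allI divide_right_mono) auto
  show "((\<lambda>n. real (card {k \<in> C. k \<le> n}) / real n) \<longlongrightarrow> 0) sequentially"
    using assms(2) unfolding has_density_def .
qed auto

lemma S_metric_nonneg:
  assumes "S_metric X S" and "x \<in> X" "y \<in> X" "z \<in> X"
  shows "S x y z \<ge> 0"
proof -
  have "\<forall>x\<in>X. \<forall>y\<in>X. \<forall>z\<in>X. S x y z \<ge> 0"
    using assms(1) unfolding S_metric_def by (elim conjE)
  then show ?thesis using assms(2-4) by blast
qed

lemma S_metric_le:
  assumes "S_metric X S" and "x \<in> X" "y \<in> X" "z \<in> X" "a \<in> X"
  shows "S x y z \<le> S x x a + S y y a + S z z a"
proof -
  have "\<forall>x\<in>X. \<forall>y\<in>X. \<forall>z\<in>X. \<forall>a\<in>X. S x y z \<le> S x x a + S y y a + S z z a"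
    using assms(1) unfolding S_metric_def by (elim conjE)
  then show ?thesis using assms(2-5) by blast
qed

lemma S_metric_change_centre:
  assumes "S_metric X S" and "x \<in> X" "u \<in> X" "l \<in> X"
  shows "S x x u \<le> 2 * S x x l + S u u l"
  using S_metric_le[OF assms(1,2,2,3,4)] by simp

theorem corollary3p2:
  fixes X :: "'a set" and S :: "'a \<Rightarrow> 'a \<Rightarrow> 'a \<Rightarrow> real"
    and x :: "nat \<Rightarrow> 'a" and l :: 'a
  assumes "S_metric X S"
    and "\<forall>n. x n \<in> X" and "l \<in> X"
    and "stat_convergent X S x l"
  shows "stat_bounded X S x"
  unfolding stat_bounded_def
proof
  fix u assume "u \<in> X"
  have "S (x n) (x n) l \<ge> 1" if "S (x n) (x n) u \<ge> S u u l + 2" for n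
    using S_metric_change_centre[OF assms(1) assms(2)[rule_format, of n] \<open>u \<in> X\<close> assms(3)] that
    by linarith
  then have "{n. S (x n) (x n) u \<ge> S u u l + 2} \<subseteq> {n. S (x n) (x n) l \<ge> 1}"
    by blast
  moreover have "has_density {n. S (x n) (x n) l \<ge> 1} 0"
    using assms(4) unfolding stat_convergent_def by simp
  ultimately have "has_density {n. S (x n) (x n) u \<ge> S u u l + 2} 0"
    by (rule has_density_zero_subset)
  moreover have "S u u l + 2 > 0"
    using S_metric_nonneg[OF assms(1) \<open>u \<in> X\<close> \<open>u \<in> X\<close> assms(3)] by simp
  ultimately show "\<exists>B>0. has_density {n. S (x n) (x n) u \<ge> B} 0" by blast
qed

end
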